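(* Let $K^{(1)},K^{(2)}$ be independent fractal percolations on $I=[0,1]$ with the same parameters $M\in\mathbb{N}_{\geq2}$ and $p\in(0,1]$, with construction steps $K_n^{(i)}$, and let $D_n^{(i)}:=\overline{I\setminus K_n^{(i)}}$. Then for any $n\in\mathbb{N}_0$, $$\mathbb{E}V_1(D_n^{(1)}\cap D_n^{(2)})=1-2\mathbb{E}V_1(K_n^{(1)})+\mathbb{E}V_1(K_n^{(1)}\cap K_n^{(2)}),$$ $$\mathbb{E}V_0(D_n^{(1)}\cap D_n^{(2)})=2\mathbb{E}V_0(K_n^{(1)})-\mathbb{E}V_0(K_n^{(1)}\cap K_n^{(2)})+\mathbb{E}N(K_n^{(1)}\cap K_n^{(2)})+1-4p^n+2p^{2n}.$$ Moreover, $\mathbb{E}V_1(D_n^{(1)})=1-\mathbb{E}V_1(K_n^{(1)})$ and $\mathbb{E}V_0(D_n^{(1)})=\mathbb{E}V_0(K_n^{(1)})+1-2p^n$.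
   Context: Fractal percolation on $[0,1]$: $K_0=[0,1]$; given $K_{n-1}$, a union of closed grid intervals of length $M^{-(n-1)}$, each is divided into $M$ closed subintervals of length $M^{-n}$, each kept independently (of everything else) with probability $p$; $K_n$ is the union of kept subintervals. $\overline{A}$ denotes closure; $V_1$ is length, $V_0$ the number of connected components, and $N(A)$ the number of isolated points of $A$. *)

theory Defs
  imports "HOL-Analysis.Analysis" "HOL-Probability.Probability" "HOL-Probability.Product_PMF"
begin

definition grid_cell :: "nat \<Rightarrow> nat \<Rightarrow> nat \<Rightarrow> real set" where
  "grid_cell M n j = {real j / real M ^ n .. (real j + 1) / real M ^ n}"

text \<open>Index set of the Bernoulli variables used up to step n:
  (k, j) with 1 <= k <= n and j < M^k, one for each grid interval of level k.\<close>
definition perc_index :: "nat \<Rightarrow> nat \<Rightarrow> (nat \<times> nat) set" where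
  "perc_index M n = {(k, j). 1 \<le> k \<and> k \<le> n \<and> j < M ^ k}"

definition perc_pmf :: "nat \<Rightarrow> real \<Rightarrow> nat \<Rightarrow> (nat \<times> nat \<Rightarrow> bool) pmf" where
  "perc_pmf M p n = Pi_pmf (perc_index M n) False (\<lambda>_. bernoulli_pmf p)"

text \<open>Construction step K_n: union of level-n grid intervals all of whose
  ancestors (at levels 1..n, including itself) were kept.
  The level-k ancestor of the level-n interval j is j div M^(n-k).\<close>
definition perc_K :: "nat \<Rightarrow> nat \<Rightarrow> (nat \<times> nat \<Rightarrow> bool) \<Rightarrow> real set" where
  "perc_K M n \<omega> = \<Union> {grid_cell M n j | j. j < M ^ n \<and>
      (\<forall>k \<in> {1..n}. \<omega> (k, j div M ^ (n - k)))}"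

definition perc_D :: "nat \<Rightarrow> nat \<Rightarrow> (nat \<times> nat \<Rightarrow> bool) \<Rightarrow> real set" where
  "perc_D M n \<omega> = closure ({0..1} - perc_K M n \<omega>)"

definition V1 :: "real set \<Rightarrow> real" where
  "V1 A = measure lborel A"

definition V0 :: "real set \<Rightarrow> real" where
  "V0 A = real (card (components A))"

definition Niso :: "real set \<Rightarrow> real" where
  "Niso A = real (card {x \<in> A. \<not> x islimpt A})"

end

(* A realisation of K_n is the union of the level-n grid intervals selected by a Boolean vector,
   and D_n is the union of the complementary intervals. All four identities therefore hold for
   every (pair of) selection(s), with the terms in p replaced by the indicators that the first and
   the last interval are removed. For lengths this is inclusion-exclusion in [0,1], the closure in
   D_n only adding null grid points. For component counts one counts components by their left
   endpoints and telescopes over the grid intervals; the isolated points of the intersection of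
   the two K_n and the endpoints 0 and 1 supply the boundary terms. Taking expectations then only
   needs that an interval survives n steps with probability p^n, independently for the two
   percolations. *)

theory Submission
  imports Defs
begin

section \<open>Components of unions of closed sets\<close>

lemma connected_subset_closed_Un_disjoint:
  fixes X Y C :: "'a::topological_space set"
  assumes "closed X" "closed Y" "X \<inter> Y = {}" "connected C" "C \<subseteq> X \<union> Y"
  shows "C \<subseteq> X \<or> C \<subseteq> Y"
  using connected_closedD[OF assms(4) _ assms(5) assms(1,2)] assms(3,5) by blast

lemma components_Un_closed_disjoint:
  fixes X Y :: "'a::topological_space set"
  assumes XY: "closed X" "closed Y" "X \<inter> Y = {}"
  shows "components (X \<union> Y) = components X \<union> components Y"
proof -
  have component_of_Un: "C \<in> components (X \<union> Y)"
    if C: "C \<in> components X" and "closed X" "closed Y" "X \<inter> Y = {}" for X Y C :: "'a set"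
    unfolding in_components_maximal
  proof (intro conjI allI impI)
    fix D assume D: "D \<noteq> {} \<and> C \<subseteq> D \<and> D \<subseteq> X \<union> Y \<and> connected D"
    have "\<not> D \<subseteq> Y"
      using D in_components_subset[OF C] in_components_nonempty[OF C] \<open>X \<inter> Y = {}\<close> by blast
    then have "D \<subseteq> X"
      using connected_subset_closed_Un_disjoint[OF that(2-4)] D by blast
    then show "D = C" using C D unfolding in_components_maximal by blast
  qed (use in_components_nonempty[OF C] in_components_subset[OF C] in_components_connected[OF C]
      in auto)
  show ?thesis
  proof (intro equalityI subsetI)
    fix C assume C: "C \<in> components (X \<union> Y)"
    then have "C \<subseteq> X \<or> C \<subseteq> Y"
      using connected_subset_closed_Un_disjoint[OF XY] in_components_connected in_components_subset
      by metis
    then show "C \<in> components X \<union> components Y"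
      using components_intermediate_subset[OF C] by blast
  next
    fix C assume "C \<in> components X \<union> components Y"
    then show "C \<in> components (X \<union> Y)"
      using component_of_Un[of C X Y] component_of_Un[of C Y X] XY
      by (auto simp: Un_commute Int_commute)
  qed
qed

lemma components_insert_closed:
  fixes X :: "'a::t1_space set"
  assumes "closed X" "y \<notin> X"
  shows "components (insert y X) = insert {y} (components X)"
proof -
  have "components {y} = {{y}}" by (simp add: components_eq_sing_iff)
  then show ?thesis
    using components_Un_closed_disjoint[OF closed_singleton assms(1), of y] assms(2) by simp
qed

lemma components_Un_connected_touching:
  fixes X C :: "'a::topological_space set"
  assumes X: "closed X" "finite (components X)"
    and C: "closed C" "connected C" and touch: "X \<inter> C = {x}"
  shows "finite (components (X \<union> C))" "card (components (X \<union> C)) = card (components X)"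
proof -
  define K where "K = connected_component_set X x"
  define R where "R = \<Union>(components X - {K})"
  have x: "x \<in> X" "x \<in> C" using touch by blast+
  have K: "K \<in> components X" "x \<in> K" using x by (auto simp: K_def componentsI)
  have closed_K: "closed K" using closed_components[OF X(1) K(1)] .
  have closed_R: "closed R"
    unfolding R_def using X closed_components[OF X(1)] by (intro closed_Union) auto
  have X_eq: "X = K \<union> R" unfolding R_def using K Union_components[of X] by blast
  have KR: "K \<inter> R = {}"
    unfolding R_def using K pairwise_disjoint_components[of X] unfolding pairwise_def by blast
  have KC: "K \<union> C \<notin> components R" "K \<notin> components R"
    using in_components_subset KR K(2) by blast+
  have "components K = {K}"
    using K by (auto simp: components_eq_sing_iff in_components_connected)
  then have comp_X: "components X = insert K (components R)"
    using components_Un_closed_disjoint[OF closed_K closed_R KR] X_eq by simp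
  have "(K \<union> C) \<inter> R = {}" using KR touch X_eq K(2) by blast
  moreover have "connected (K \<union> C)"
    using K x by (intro connected_Un in_components_connected[OF K(1)] C(2)) blast
  moreover have "components (K \<union> C) = {K \<union> C}"
    using calculation(2) K(2) by (auto simp: components_eq_sing_iff)
  ultimately have "components (X \<union> C) = insert (K \<union> C) (components R)"
    using components_Un_closed_disjoint[OF closed_Un[OF closed_K C(1)] closed_R] X_eq
    by (simp add: Un_ac)
  then show "finite (components (X \<union> C))" "card (components (X \<union> C)) = card (components X)"
    using comp_X X(2) KC by simp_all
qed

lemma isolated_points_closed_Un_finite:
  fixes C F :: "'a::t1_space set"
  assumes "closed C" "finite F" "\<And>x. x \<in> C \<Longrightarrow> x islimpt C"
  shows "{x \<in> C \<union> F. \<not> x islimpt (C \<union> F)} = F - C"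
  using assms islimpt_finite[OF assms(2)] by (auto simp: islimpt_Un closed_limpt)

section \<open>Unions of grid intervals\<close>

definition grid_interval :: "nat \<Rightarrow> nat \<Rightarrow> real set" where
  "grid_interval N j = {real j / real N .. (real j + 1) / real N}"

definition grid_union :: "nat \<Rightarrow> (nat \<Rightarrow> bool) \<Rightarrow> real set" where
  "grid_union N b = (\<Union>j \<in> {j. j < N \<and> b j}. grid_interval N j)"

lemma mem_grid_union_iff: "x \<in> grid_union N b \<longleftrightarrow> (\<exists>j<N. b j \<and> x \<in> grid_interval N j)"
  by (auto simp: grid_union_def)

lemma mem_grid_interval_iff:
  "0 < N \<Longrightarrow> x \<in> grid_interval N j \<longleftrightarrow> real j \<le> x * real N \<and> x * real N \<le> real j + 1"
  by (auto simp: grid_interval_def divide_le_eq le_divide_eq)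

lemma grid_interval_nondegenerate: "0 < N \<Longrightarrow> real j / real N < (real j + 1) / real N"
  by (simp add: divide_strict_right_mono)

lemma grid_interval_subset_unit: "j < N \<Longrightarrow> grid_interval N j \<subseteq> {0..1}"
  by (auto simp: grid_interval_def divide_le_eq le_divide_eq)

lemma grid_union_subset_unit: "grid_union N b \<subseteq> {0..1}"
  using grid_interval_subset_unit by (auto simp: grid_union_def)

lemma closed_grid_union: "closed (grid_union N b)"
  unfolding grid_union_def by (intro closed_UN) (auto simp: grid_interval_def)

lemma grid_interval_eq_of_interior:
  assumes "0 < N" "real j < x * real N" "x * real N < real j + 1" "x \<in> grid_interval N i"
  shows "i = j"
proof -
  have "real i < real j + 1" "real j < real i + 1"
    using assms mem_grid_interval_iff[of N x i] by auto
  then show ?thesis by linarith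
qed

lemma grid_point_mem_grid_interval_iff:
  assumes "0 < N"
  shows "real k / real N \<in> grid_interval N i \<longleftrightarrow> i = k \<or> Suc i = k"
proof -
  have "real k / real N \<in> grid_interval N i \<longleftrightarrow> real i \<le> real k \<and> real k \<le> real i + 1"
    using mem_grid_interval_iff[OF assms] assms by simp
  then show ?thesis by linarith
qed

lemma grid_interval_Int_eq_grid_point:
  assumes "0 < N" "x \<in> grid_interval N i" "x \<in> grid_interval N j" "i \<noteq> j"
  shows "x = real (max i j) / real N"
proof -
  have "x * real N = real (max i j)"
    using assms mem_grid_interval_iff[OF assms(1)] by (cases "i < j") (auto simp: max_def)
  then show ?thesis using assms(1) by (simp add: eq_divide_eq)
qed

lemma ex_grid_interval_mem:
  assumes N: "0 < N" and x: "x \<in> {0..1}"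
  shows "\<exists>j<N. x \<in> grid_interval N j"
proof -
  have t: "0 \<le> x * real N" "x * real N \<le> real N"
    using x by (auto simp: mult_left_le_one_le)
  show ?thesis
  proof (cases "x * real N < real N")
    case True
    define j where "j = nat \<lfloor>x * real N\<rfloor>"
    have "real j = of_int \<lfloor>x * real N\<rfloor>" using t(1) by (simp add: j_def)
    then have "real j \<le> x * real N" "x * real N < real j + 1" by linarith+
    moreover from this have "j < N" using True by linarith
    ultimately show ?thesis using mem_grid_interval_iff[OF N, of x j] by auto
  next
    case False
    then have "x * real N = real (N - 1) + 1" using t N by (simp add: of_nat_diff)
    then have "x \<in> grid_interval N (N - 1)" using mem_grid_interval_iff[OF N, of x "N - 1"] by simp
    then show ?thesis using N by (intro exI[of _ "N - 1"]) simp
  qed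
qed

lemma grid_union_Un_compl:
  assumes N: "0 < N"
  shows "grid_union N b \<union> grid_union N (\<lambda>j. \<not> b j) = {0..1}"
proof
  show "grid_union N b \<union> grid_union N (\<lambda>j. \<not> b j) \<subseteq> {0..1}"
    using grid_union_subset_unit by blast
  show "{0..1} \<subseteq> grid_union N b \<union> grid_union N (\<lambda>j. \<not> b j)"
  proof
    fix x :: real assume "x \<in> {0..1}"
    then obtain j where "j < N" "x \<in> grid_interval N j" using ex_grid_interval_mem[OF N] by blast
    then show "x \<in> grid_union N b \<union> grid_union N (\<lambda>j. \<not> b j)"
      by (cases "b j") (auto simp: mem_grid_union_iff)
  qed
qed

lemma grid_union_Int_compl_subset_grid_points:
  assumes "0 < N"
  shows "grid_union N b \<inter> grid_union N (\<lambda>j. \<not> b j) \<subseteq> (\<lambda>k. real k / real N) ` {..N}"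
proof
  fix x assume "x \<in> grid_union N b \<inter> grid_union N (\<lambda>j. \<not> b j)"
  then obtain i j where "i < N" "j < N" "b i" "\<not> b j" "x \<in> grid_interval N i" "x \<in> grid_interval N j"
    by (auto simp: mem_grid_union_iff)
  then have "x = real (max i j) / real N"
    by (intro grid_interval_Int_eq_grid_point[OF assms]) auto
  moreover have "max i j \<le> N" using \<open>i < N\<close> \<open>j < N\<close> by simp
  ultimately show "x \<in> (\<lambda>k. real k / real N) ` {..N}" by blast
qed

lemma grid_point_mem_grid_union_iff:
  assumes "0 < N"
  shows "real k / real N \<in> grid_union N b \<longleftrightarrow> (k < N \<and> b k) \<or> (0 < k \<and> k \<le> N \<and> b (k - 1))"
proof -
  have "real k / real N \<in> grid_union N b \<longleftrightarrow> (\<exists>j<N. b j \<and> (j = k \<or> Suc j = k))"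
    by (auto simp: mem_grid_union_iff grid_point_mem_grid_interval_iff[OF assms])
  also have "\<dots> \<longleftrightarrow> (k < N \<and> b k) \<or> (0 < k \<and> k \<le> N \<and> b (k - 1))"
    by (cases k) (fastforce simp: Suc_le_eq)+
  finally show ?thesis .
qed

lemma zero_mem_grid_union_iff: "0 < N \<Longrightarrow> 0 \<in> grid_union N b \<longleftrightarrow> b 0"
  using grid_point_mem_grid_union_iff[of N 0 b] by simp

lemma closure_unit_diff_grid_union:
  assumes N: "0 < N"
  shows "closure ({0..1} - grid_union N b) = grid_union N (\<lambda>j. \<not> b j)"
proof
  show "closure ({0..1} - grid_union N b) \<subseteq> grid_union N (\<lambda>j. \<not> b j)"
    using grid_union_Un_compl[OF N, of b] closed_grid_union by (intro closure_minimal) auto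
next
  show "grid_union N (\<lambda>j. \<not> b j) \<subseteq> closure ({0..1} - grid_union N b)"
  proof
    fix x assume "x \<in> grid_union N (\<lambda>j. \<not> b j)"
    then obtain j where j: "j < N" "\<not> b j" "x \<in> grid_interval N j"
      by (auto simp: mem_grid_union_iff)
    have "{real j / real N <..< (real j + 1) / real N} \<subseteq> {0..1} - grid_union N b"
    proof
      fix y assume y: "y \<in> {real j / real N <..< (real j + 1) / real N}"
      then have "real j < y * real N" "y * real N < real j + 1"
        using N by (auto simp: divide_less_eq less_divide_eq)
      then have "y \<notin> grid_union N b"
        using grid_interval_eq_of_interior[OF N] j(2) by (auto simp: mem_grid_union_iff)
      moreover have "y \<in> grid_interval N j" using y by (auto simp: grid_interval_def)
      then have "y \<in> {0..1}" using grid_interval_subset_unit[OF j(1)] by blast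
      ultimately show "y \<in> {0..1} - grid_union N b" by blast
    qed
    from closure_mono[OF this] show "x \<in> closure ({0..1} - grid_union N b)"
      using j(3) grid_interval_nondegenerate[OF N, of j] by (auto simp: grid_interval_def)
  qed
qed

section \<open>Length and component counts of grid unions\<close>

lemma fmeasurable_grid_union: "grid_union N b \<in> fmeasurable lborel"
proof (rule fmeasurableI2[of "{0..1}"])
  show "{0..1::real} \<in> fmeasurable lborel" by (simp add: fmeasurable_def emeasure_lborel_Icc)
  show "grid_union N b \<in> sets lborel" by (simp add: borel_closed closed_grid_union)
qed (rule grid_union_subset_unit)

lemma V1_grid_union_compl_Int:
  assumes N: "0 < N"
  shows "V1 (grid_union N (\<lambda>j. \<not> b j) \<inter> grid_union N (\<lambda>j. \<not> c j))
       = 1 - V1 (grid_union N b) - V1 (grid_union N c) + V1 (grid_union N b \<inter> grid_union N c)"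
proof -
  define U where "U = grid_union N b \<union> grid_union N c"
  define E where "E = grid_union N (\<lambda>j. \<not> b j) \<inter> grid_union N (\<lambda>j. \<not> c j)"
  define P where "P = (\<lambda>k. real k / real N) ` {..N}"
  have "{0..1} - U \<subseteq> E"
    using grid_union_Un_compl[OF N, of b] grid_union_Un_compl[OF N, of c] by (auto simp: U_def E_def)
  moreover have "E \<inter> U \<subseteq> P"
    using grid_union_Int_compl_subset_grid_points[OF N, of b]
      grid_union_Int_compl_subset_grid_points[OF N, of c]
    by (auto simp: U_def E_def P_def)
  moreover have "E \<subseteq> {0..1}" using grid_union_subset_unit by (auto simp: E_def)
  ultimately have E_eq: "E = ({0..1} - U) \<union> (E \<inter> P)" by blast
  have U: "U \<in> sets lborel" using closed_grid_union by (auto simp: U_def)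
  have "V1 E = measure lborel ({0..1} - U)"
    unfolding V1_def
    by (subst E_eq, rule measure_Un_null_set)
       (use U in \<open>auto intro!: finite_imp_null_set_lborel simp: P_def\<close>)
  also have "\<dots> = 1 - measure lborel U"
    using U grid_union_subset_unit by (subst measure_Diff) (auto simp: U_def emeasure_lborel_Icc)
  also have "measure lborel U
      = V1 (grid_union N b) + V1 (grid_union N c) - V1 (grid_union N b \<inter> grid_union N c)"
    unfolding U_def V1_def by (rule measure_Un3) (auto intro: fmeasurable_grid_union)
  finally show ?thesis by (simp add: E_def)
qed

lemma grid_union_Int_grid_interval_subset_endpoints:
  assumes N: "0 < N" and not_common: "\<not> (b m \<and> c m)"
  shows "grid_union N b \<inter> grid_union N c \<inter> grid_interval N m
           \<subseteq> {real m / real N, real (Suc m) / real N}"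
proof
  fix x assume x: "x \<in> grid_union N b \<inter> grid_union N c \<inter> grid_interval N m"
  show "x \<in> {real m / real N, real (Suc m) / real N}"
  proof (rule ccontr)
    assume "x \<notin> {real m / real N, real (Suc m) / real N}"
    then have "x * real N \<noteq> real m" "x * real N \<noteq> real m + 1"
      using N by (auto simp: eq_divide_eq)
    then have interior: "real m < x * real N" "x * real N < real m + 1"
      using x mem_grid_interval_iff[OF N] by auto
    have "b m" "c m"
      using x grid_interval_eq_of_interior[OF N interior] by (auto simp: mem_grid_union_iff)
    then show False using not_common by blast
  qed
qed

text \<open>Components are counted by their left endpoints: a component of the intersection starts
  at 0 or at a grid point (i+1)/N that follows an interval i not common to both unions.\<close>

definition starts_component :: "nat \<Rightarrow> (nat \<Rightarrow> bool) \<Rightarrow> (nat \<Rightarrow> bool) \<Rightarrow> nat \<Rightarrow> bool" where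
  "starts_component N b c i \<longleftrightarrow>
     \<not> (b i \<and> c i) \<and> real (Suc i) / real N \<in> grid_union N b \<inter> grid_union N c"

lemma components_grid_union_Int_prefix:
  fixes b c :: "nat \<Rightarrow> bool"
  assumes N: "0 < N" and "m \<le> N"
  defines "A \<equiv> grid_union N b \<inter> grid_union N c"
  shows "finite (components (A \<inter> {..real m / real N})) \<and>
    card (components (A \<inter> {..real m / real N}))
      = of_bool (0 \<in> A) + (\<Sum>i<m. of_bool (starts_component N b c i))"
  using \<open>m \<le> N\<close>
proof (induction m)
  case 0
  have "A \<inter> {..real 0 / real N} = (if 0 \<in> A then {0} else {})"
    using grid_union_subset_unit by (force simp: A_def)
  then show ?case by (simp add: components_eq_sing_iff[THEN iffD2])
next
  case (Suc m)
  define A' where "A' = A \<inter> {..real m / real N}"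
  have m: "m < N" using Suc.prems by simp
  have IH: "finite (components A')"
    "card (components A') = of_bool (0 \<in> A) + (\<Sum>i<m. of_bool (starts_component N b c i))"
    using Suc by (auto simp: A'_def)
  have start: "starts_component N b c m \<longleftrightarrow> \<not> (b m \<and> c m) \<and> real (Suc m) / real N \<in> A"
    by (simp add: starts_component_def A_def)
  have closed_A': "closed A'" unfolding A'_def A_def by (intro closed_Int closed_grid_union) simp
  have "real m / real N \<le> real (Suc m) / real N" by (simp add: divide_right_mono)
  then have split: "A \<inter> {..real (Suc m) / real N} = A' \<union> (A \<inter> grid_interval N m)"
    using grid_union_subset_unit by (auto simp: A'_def A_def grid_interval_def add.commute)
  have ends: "real m / real N \<in> grid_interval N m" "real (Suc m) / real N \<in> grid_interval N m"
    by (rule grid_point_mem_grid_interval_iff[OF N, THEN iffD2], simp)+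
  show ?case
  proof (cases "b m \<and> c m")
    case True
    then have "grid_interval N m \<subseteq> A" using m by (auto simp: A_def mem_grid_union_iff)
    then have "A \<inter> {..real (Suc m) / real N} = A' \<union> grid_interval N m"
      and "A' \<inter> grid_interval N m = {real m / real N}"
      using split ends by (auto simp: A'_def grid_interval_def)
    then show ?thesis
      using components_Un_connected_touching[OF closed_A' IH(1)] IH True start
      by (simp add: grid_interval_def)
  next
    case False
    have "real m / real N \<in> A \<Longrightarrow> real m / real N \<in> A'" by (simp add: A'_def)
    then have eq: "A \<inter> {..real (Suc m) / real N} = A' \<union> (A \<inter> {real (Suc m) / real N})"
      using split ends
        grid_union_Int_grid_interval_subset_endpoints[where b = b and c = c, OF N False]
      by (auto simp: A_def)
    have "real (Suc m) / real N \<notin> A'" using N by (simp add: A'_def divide_le_eq)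
    then have "{real (Suc m) / real N} \<notin> components A'" using in_components_subset by blast
    then show ?thesis
      using eq components_insert_closed[OF closed_A' \<open>_ \<notin> A'\<close>] IH False start
      by (cases "real (Suc m) / real N \<in> A") simp_all
  qed
qed

lemma V0_grid_union_Int:
  assumes N: "0 < N"
  shows "V0 (grid_union N b \<inter> grid_union N c)
    = of_bool (b 0 \<and> c 0) + (\<Sum>i<N. of_bool (starts_component N b c i))"
proof -
  have "grid_union N b \<inter> grid_union N c \<inter> {..real N / real N} = grid_union N b \<inter> grid_union N c"
    using grid_union_subset_unit[of N b] N by auto
  then show ?thesis
    using components_grid_union_Int_prefix[OF N order.refl, of b c] zero_mem_grid_union_iff[OF N]
    unfolding V0_def by (simp del: sum_of_bool_eq)
qed

lemma grid_union_islimpt: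
  assumes "0 < N" "x \<in> grid_union N b"
  shows "x islimpt grid_union N b"
proof -
  obtain j where "j < N" "b j" "x \<in> grid_interval N j"
    using assms(2) by (auto simp: mem_grid_union_iff)
  moreover have "x islimpt grid_interval N j"
    using calculation(3) grid_interval_nondegenerate[OF assms(1), of j] by (simp add: grid_interval_def)
  moreover have "grid_interval N j \<subseteq> grid_union N b"
    using calculation(1,2) by (auto simp: grid_union_def)
  ultimately show ?thesis using islimpt_subset by blast
qed

lemma grid_union_Int_subset_common_Un_grid_points:
  assumes N: "0 < N"
  shows "grid_union N b \<inter> grid_union N c
           \<subseteq> grid_union N (\<lambda>j. b j \<and> c j) \<union> (\<lambda>k. real k / real N) ` {..N}"
proof
  fix x assume "x \<in> grid_union N b \<inter> grid_union N c"
  then obtain i j where ij: "i < N" "j < N" "b i" "c j" "x \<in> grid_interval N i" "x \<in> grid_interval N j"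
    by (auto simp: mem_grid_union_iff)
  show "x \<in> grid_union N (\<lambda>j. b j \<and> c j) \<union> (\<lambda>k. real k / real N) ` {..N}"
  proof (cases "i = j")
    case True
    then show ?thesis using ij by (auto simp: mem_grid_union_iff)
  next
    case False
    then have "x = real (max i j) / real N"
      using grid_interval_Int_eq_grid_point[OF N] ij by blast
    moreover have "max i j \<le> N" using ij by simp
    ultimately show ?thesis by auto
  qed
qed

text \<open>The intersection is the union of the common intervals, which has no isolated points, and
  finitely many grid points; so its isolated points are the grid points outside the common
  intervals.\<close>

lemma Niso_grid_union_Int:
  assumes N: "0 < N"
  shows "Niso (grid_union N b \<inter> grid_union N c)
    = (\<Sum>i<N. of_bool (real (Suc i) / real N
         \<in> grid_union N b \<inter> grid_union N c - grid_union N (\<lambda>j. b j \<and> c j)))"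
proof -
  define A where "A = grid_union N b \<inter> grid_union N c"
  define B where "B = grid_union N (\<lambda>j. b j \<and> c j)"
  define P where "P = (\<lambda>k. real k / real N) ` {..N}"
  have "A \<subseteq> B \<union> P"
    using grid_union_Int_subset_common_Un_grid_points[OF N] by (simp add: A_def B_def P_def)
  moreover have "B \<subseteq> A" by (auto simp: A_def B_def mem_grid_union_iff)
  ultimately have "A = B \<union> (A \<inter> P)" by blast
  then have "{x \<in> A. \<not> x islimpt A} = A \<inter> P - B"
    using isolated_points_closed_Un_finite[of B "A \<inter> P"] grid_union_islimpt[OF N]
    by (simp add: B_def P_def closed_grid_union)
  also have "\<dots> = (\<lambda>i. real (Suc i) / real N) ` {i \<in> {..<N}. real (Suc i) / real N \<in> A - B}"
  proof (intro equalityI subsetI)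
    fix x assume x: "x \<in> A \<inter> P - B"
    then obtain k where k: "k \<le> N" "x = real k / real N" by (auto simp: P_def)
    have "0 \<notin> A - B" using zero_mem_grid_union_iff[OF N] by (simp add: A_def B_def)
    then obtain i where "k = Suc i" using x k by (cases k) auto
    then show "x \<in> (\<lambda>i. real (Suc i) / real N) ` {i \<in> {..<N}. real (Suc i) / real N \<in> A - B}"
      using x k by auto
  next
    fix x assume "x \<in> (\<lambda>i. real (Suc i) / real N) ` {i \<in> {..<N}. real (Suc i) / real N \<in> A - B}"
    then obtain i where i: "i < N" "x = real (Suc i) / real N" "x \<in> A - B" by blast
    then have "x \<in> P" unfolding P_def by (intro image_eqI[of _ _ "Suc i"]) auto
    then show "x \<in> A \<inter> P - B" using i by blast
  qed
  finally have "Niso A = real (card {i \<in> {..<N}. real (Suc i) / real N \<in> A - B})"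
    unfolding Niso_def using N by (simp add: card_image inj_on_def)
  also have "{i \<in> {..<N}. real (Suc i) / real N \<in> A - B}
      = {..<N} \<inter> {i. real (Suc i) / real N \<in> A - B}"
    by blast
  finally show ?thesis by (simp add: A_def B_def)
qed

lemma starts_component_compl_step:
  fixes b c :: "nat \<Rightarrow> bool"
  assumes N: "0 < N" and m: "m < N"
  shows "of_bool (starts_component N (\<lambda>j. \<not> b j) (\<lambda>j. \<not> c j) m)
      - of_bool (starts_component N b b m) - of_bool (starts_component N c c m)
      + of_bool (starts_component N b c m)
      - of_bool (real (Suc m) / real N
          \<in> grid_union N b \<inter> grid_union N c - grid_union N (\<lambda>j. b j \<and> c j))
    = (of_bool (b m \<or> c m) - of_bool (b (min (Suc m) (N - 1)) \<or> c (min (Suc m) (N - 1))) :: real)"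
proof (cases "Suc m < N")
  case True
  then show ?thesis unfolding starts_component_def
    by (simp only: Int_iff Diff_iff grid_point_mem_grid_union_iff[OF N])
       (cases "b m"; cases "c m"; cases "b (Suc m)"; cases "c (Suc m)"; simp add: m)
next
  case False
  have "N = Suc m" using False m by simp
  show ?thesis unfolding starts_component_def
    by (simp only: Int_iff Diff_iff grid_point_mem_grid_union_iff[OF N])
       (cases "b m"; cases "c m"; simp add: \<open>N = Suc m\<close>)
qed

lemma V0_grid_union_compl_Int:
  assumes N: "0 < N"
  shows "V0 (grid_union N (\<lambda>j. \<not> b j) \<inter> grid_union N (\<lambda>j. \<not> c j))
    = V0 (grid_union N b) + V0 (grid_union N c) - V0 (grid_union N b \<inter> grid_union N c)
      + Niso (grid_union N b \<inter> grid_union N c)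
      + of_bool (\<not> b 0 \<and> \<not> c 0) + of_bool (\<not> b (N - 1) \<and> \<not> c (N - 1)) - 1"
proof -
  define s :: "(nat \<Rightarrow> bool) \<Rightarrow> (nat \<Rightarrow> bool) \<Rightarrow> real" where
    "s b c = (\<Sum>i<N. of_bool (starts_component N b c i))" for b c
  define d :: "nat \<Rightarrow> real" where
    "d m = of_bool (starts_component N (\<lambda>j. \<not> b j) (\<lambda>j. \<not> c j) m)
      - of_bool (starts_component N b b m) - of_bool (starts_component N c c m)
      + of_bool (starts_component N b c m)
      - of_bool (real (Suc m) / real N
          \<in> grid_union N b \<inter> grid_union N c - grid_union N (\<lambda>j. b j \<and> c j))" for m
  define w :: "nat \<Rightarrow> real" where "w k = of_bool (b (min k (N - 1)) \<or> c (min k (N - 1)))" for k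
  \<comment> \<open>clamped to N - 1, so that the sum telescopes to the two boundary terms\<close>
  have d_eq: "d m = w m - w (Suc m)" if "m < N" for m
  proof -
    have min_m: "min m (N - 1) = m" using that by simp
    show ?thesis unfolding d_def w_def min_m by (rule starts_component_compl_step[OF N that])
  qed
  have "s (\<lambda>j. \<not> b j) (\<lambda>j. \<not> c j) - s b b - s c c + s b c - Niso (grid_union N b \<inter> grid_union N c)
      = (\<Sum>m<N. d m)"
    by (simp only: s_def d_def Niso_grid_union_Int[OF N] sum_subtractf sum.distrib)
  also have "\<dots> = (\<Sum>m<N. w m - w (Suc m))" using d_eq by (intro sum.cong) auto
  also have "\<dots> = w 0 - w N" by (rule sum_lessThan_telescope')
  also have "\<dots> = of_bool (b 0 \<or> c 0) - of_bool (b (N - 1) \<or> c (N - 1))"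
    by (simp add: w_def)
  finally have telescope: "s (\<lambda>j. \<not> b j) (\<lambda>j. \<not> c j) - s b b - s c c + s b c
      - Niso (grid_union N b \<inter> grid_union N c)
      = of_bool (b 0 \<or> c 0) - of_bool (b (N - 1) \<or> c (N - 1))" .
  have "V0 (grid_union N b) = of_bool (b 0) + s b b" "V0 (grid_union N c) = of_bool (c 0) + s c c"
    using V0_grid_union_Int[OF N, of b b] V0_grid_union_Int[OF N, of c c]
    by (simp_all add: s_def del: sum_of_bool_eq)
  moreover have "of_bool (b 0 \<or> c 0) = (of_bool (b 0) + of_bool (c 0) - of_bool (b 0 \<and> c 0) :: real)"
    "of_bool (\<not> b (N - 1) \<and> \<not> c (N - 1)) = (1 - of_bool (b (N - 1) \<or> c (N - 1)) :: real)"
    by simp_all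
  ultimately show ?thesis
    using V0_grid_union_Int[OF N, of "\<lambda>j. \<not> b j" "\<lambda>j. \<not> c j"] V0_grid_union_Int[OF N, of b c]
      telescope
    unfolding s_def by linarith
qed

lemma V1_grid_union_compl: "0 < N \<Longrightarrow> V1 (grid_union N (\<lambda>j. \<not> b j)) = 1 - V1 (grid_union N b)"
  using V1_grid_union_compl_Int[of N b b] by simp

lemma Niso_grid_union: "0 < N \<Longrightarrow> Niso (grid_union N b) = 0"
  using Niso_grid_union_Int[of N b b] by simp

lemma V0_grid_union_compl:
  "0 < N \<Longrightarrow> V0 (grid_union N (\<lambda>j. \<not> b j))
     = V0 (grid_union N b) + of_bool (\<not> b 0) + of_bool (\<not> b (N - 1)) - 1"
  using V0_grid_union_compl_Int[of N b b] Niso_grid_union[of N b] by simp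

section \<open>Fractal percolation as a random grid union\<close>

definition perc_kept :: "nat \<Rightarrow> nat \<Rightarrow> (nat \<times> nat \<Rightarrow> bool) \<Rightarrow> nat \<Rightarrow> bool" where
  "perc_kept M n \<omega> j \<longleftrightarrow> (\<forall>k\<in>{1..n}. \<omega> (k, j div M ^ (n - k)))"

lemma perc_K_eq_grid_union: "perc_K M n \<omega> = grid_union (M ^ n) (perc_kept M n \<omega>)"
proof -
  have "grid_cell M n j = grid_interval (M ^ n) j" for j
    by (simp add: grid_cell_def grid_interval_def)
  then show ?thesis unfolding perc_K_def grid_union_def perc_kept_def by blast
qed

lemma perc_D_eq_grid_union:
  "0 < M \<Longrightarrow> perc_D M n \<omega> = grid_union (M ^ n) (\<lambda>j. \<not> perc_kept M n \<omega> j)"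
  by (simp add: perc_D_def perc_K_eq_grid_union closure_unit_diff_grid_union)

lemma finite_perc_index: "finite (perc_index M n)"
proof -
  have "perc_index M n = (SIGMA k:{1..n}. {..<M ^ k})" by (auto simp: perc_index_def)
  then show ?thesis by simp
qed

lemma finite_set_perc_pmf: "finite (set_pmf (perc_pmf M p n))"
  unfolding perc_pmf_def by (simp add: set_Pi_pmf finite_PiE_dflt finite_perc_index)

lemma integrable_perc_pmf: "integrable (measure_pmf (perc_pmf M p n)) (f :: _ \<Rightarrow> real)"
  by (rule integrable_measure_pmf_finite[OF finite_set_perc_pmf])

lemma integrable_pair_perc_pmf:
  "integrable (measure_pmf (pair_pmf (perc_pmf M p n) (perc_pmf M p n))) (f :: _ \<Rightarrow> real)"
  by (rule integrable_measure_pmf_finite) (simp add: finite_set_perc_pmf)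

text \<open>An interval of level n survives iff its n ancestors (itself included) are all kept,
  which are n distinct independent Bernoulli(p) variables.\<close>

lemma expectation_perc_kept:
  assumes p: "0 \<le> p" "p \<le> 1" and j: "j < M ^ n"
  shows "measure_pmf.expectation (perc_pmf M p n) (\<lambda>\<omega>. of_bool (perc_kept M n \<omega> j)) = p ^ n"
proof -
  define I where "I = perc_index M n"
  define E where "E = (\<lambda>k. (k, j div M ^ (n - k))) ` {1..n}"
  define B where "B x = (if x \<in> E then {True} else UNIV)" for x
  have "E \<subseteq> I"
  proof
    fix x assume "x \<in> E"
    then obtain k where k: "x = (k, j div M ^ (n - k))" "1 \<le> k" "k \<le> n" by (auto simp: E_def)
    have "M ^ n = M ^ k * M ^ (n - k)" using k by (simp flip: power_add)
    then have "j div M ^ (n - k) < M ^ k" using j by (simp add: less_mult_imp_div_less)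
    then show "x \<in> I" using k by (simp add: I_def perc_index_def)
  qed
  have fin_I: "finite I" unfolding I_def by (rule finite_perc_index)
  have "(\<lambda>\<omega>. of_bool (perc_kept M n \<omega> j)) = (indicator (Pi I B) :: _ \<Rightarrow> real)"
  proof
    fix \<omega>
    have "perc_kept M n \<omega> j \<longleftrightarrow> (\<forall>x\<in>E. \<omega> x)" by (auto simp: perc_kept_def E_def)
    also have "\<dots> \<longleftrightarrow> \<omega> \<in> Pi I B" using \<open>E \<subseteq> I\<close> by (auto simp: B_def Pi_def)
    finally show "of_bool (perc_kept M n \<omega> j) = (indicator (Pi I B) \<omega> :: real)"
      by (simp add: indicator_def)
  qed
  then have "measure_pmf.expectation (perc_pmf M p n) (\<lambda>\<omega>. of_bool (perc_kept M n \<omega> j))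
      = measure_pmf.prob (perc_pmf M p n) (Pi I B)" by simp
  also have "\<dots> = (\<Prod>x\<in>I. measure_pmf.prob (bernoulli_pmf p) (B x))"
    unfolding perc_pmf_def I_def by (rule measure_Pi_pmf_Pi) (use fin_I in \<open>simp add: I_def\<close>)
  also have "\<dots> = (\<Prod>x\<in>I. if x \<in> E then p else 1)"
    using p by (intro prod.cong) (auto simp: B_def measure_pmf_single)
  also have "\<dots> = (\<Prod>x\<in>{x \<in> I. x \<in> E}. p)" by (rule prod.inter_filter[OF fin_I, symmetric])
  also have "{x \<in> I. x \<in> E} = E" using \<open>E \<subseteq> I\<close> by blast
  also have "(\<Prod>x\<in>E. p) = p ^ n"
    unfolding E_def by (subst prod_constant, subst card_image) (auto simp: inj_on_def)
  finally show ?thesis .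
qed

lemma expectation_perc_removed:
  assumes "0 \<le> p" "p \<le> 1" "j < M ^ n"
  shows "measure_pmf.expectation (perc_pmf M p n) (\<lambda>\<omega>. of_bool (\<not> perc_kept M n \<omega> j)) = 1 - p ^ n"
  using expectation_perc_kept[OF assms] by (simp add: of_bool_not_iff integrable_perc_pmf)

lemma expectation_pair_pmf_mult:
  fixes f g :: "_ \<Rightarrow> real"
  assumes A: "finite (set_pmf A)" and B: "finite (set_pmf B)"
  shows "measure_pmf.expectation (pair_pmf A B) (\<lambda>(a, b). f a * g b)
       = measure_pmf.expectation A f * measure_pmf.expectation B g"
proof -
  have "measure_pmf.expectation (pair_pmf A B) (\<lambda>(a, b). f a * g b)
      = (\<Sum>(a, b)\<in>set_pmf A \<times> set_pmf B. f a * g b * pmf (pair_pmf A B) (a, b))"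
    using A B by (subst integral_measure_pmf_real) (auto simp: case_prod_beta)
  also have "\<dots> = (\<Sum>a\<in>set_pmf A. \<Sum>b\<in>set_pmf B. (f a * pmf A a) * (g b * pmf B b))"
    unfolding sum.cartesian_product by (intro sum.cong refl) (auto simp: pmf_pair algebra_simps)
  also have "\<dots> = (\<Sum>a\<in>set_pmf A. f a * pmf A a) * (\<Sum>b\<in>set_pmf B. g b * pmf B b)"
    by (simp add: sum_product)
  also have "\<dots> = measure_pmf.expectation A f * measure_pmf.expectation B g"
    using A B by (simp add: integral_measure_pmf_real[of A] integral_measure_pmf_real[of B])
  finally show ?thesis .
qed

lemma expectation_perc_removed_both:
  assumes "0 \<le> p" "p \<le> 1" "j < M ^ n"
  shows "measure_pmf.expectation (pair_pmf (perc_pmf M p n) (perc_pmf M p n))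
      (\<lambda>(\<omega>1, \<omega>2). of_bool (\<not> perc_kept M n \<omega>1 j \<and> \<not> perc_kept M n \<omega>2 j)) = (1 - p ^ n)\<^sup>2"
proof -
  have "(\<lambda>(\<omega>1, \<omega>2). of_bool (\<not> perc_kept M n \<omega>1 j \<and> \<not> perc_kept M n \<omega>2 j) :: real)
      = (\<lambda>(\<omega>1, \<omega>2). of_bool (\<not> perc_kept M n \<omega>1 j) * of_bool (\<not> perc_kept M n \<omega>2 j))"
    by auto
  then show ?thesis
    using expectation_pair_pmf_mult[OF finite_set_perc_pmf finite_set_perc_pmf,
        where f = "\<lambda>\<omega>. of_bool (\<not> perc_kept M n \<omega> j)" and g = "\<lambda>\<omega>. of_bool (\<not> perc_kept M n \<omega> j)"]
      expectation_perc_removed[OF assms]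
    by (simp add: power2_eq_square)
qed

section \<open>Expectations\<close>

lemma expectation_V1_perc_D_Int:
  fixes M n :: nat and p :: real
  assumes "0 < M"
  defines "P \<equiv> perc_pmf M p n"
  shows "measure_pmf.expectation (pair_pmf P P) (\<lambda>(\<omega>1, \<omega>2). V1 (perc_D M n \<omega>1 \<inter> perc_D M n \<omega>2))
    = 1 - 2 * measure_pmf.expectation P (\<lambda>\<omega>. V1 (perc_K M n \<omega>))
      + measure_pmf.expectation (pair_pmf P P) (\<lambda>(\<omega>1, \<omega>2). V1 (perc_K M n \<omega>1 \<inter> perc_K M n \<omega>2))"
proof -
  have "measure_pmf.expectation (pair_pmf P P) (\<lambda>(\<omega>1, \<omega>2). V1 (perc_D M n \<omega>1 \<inter> perc_D M n \<omega>2))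
      = measure_pmf.expectation (pair_pmf P P) (\<lambda>x. 1 - V1 (perc_K M n (fst x))
          - V1 (perc_K M n (snd x)) + V1 (perc_K M n (fst x) \<inter> perc_K M n (snd x)))"
    using assms(1) by (intro Bochner_Integration.integral_cong)
      (auto simp: perc_D_eq_grid_union perc_K_eq_grid_union V1_grid_union_compl_Int)
  then show ?thesis
    by (simp add: P_def integrable_pair_perc_pmf case_prod_beta'
        expectation_pair_pmf_fst[where f = "\<lambda>\<omega>. V1 (perc_K M n \<omega>)"]
        expectation_pair_pmf_snd[where f = "\<lambda>\<omega>. V1 (perc_K M n \<omega>)"])
qed

lemma expectation_V0_perc_D_Int:
  fixes M n :: nat and p :: real
  assumes "0 < M" "0 \<le> p" "p \<le> 1"
  defines "P \<equiv> perc_pmf M p n"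
  shows "measure_pmf.expectation (pair_pmf P P) (\<lambda>(\<omega>1, \<omega>2). V0 (perc_D M n \<omega>1 \<inter> perc_D M n \<omega>2))
    = 2 * measure_pmf.expectation P (\<lambda>\<omega>. V0 (perc_K M n \<omega>))
      - measure_pmf.expectation (pair_pmf P P) (\<lambda>(\<omega>1, \<omega>2). V0 (perc_K M n \<omega>1 \<inter> perc_K M n \<omega>2))
      + measure_pmf.expectation (pair_pmf P P) (\<lambda>(\<omega>1, \<omega>2). Niso (perc_K M n \<omega>1 \<inter> perc_K M n \<omega>2))
      + 1 - 4 * p ^ n + 2 * p ^ (2 * n)"
proof -
  define removed_both :: "nat \<Rightarrow> _ \<Rightarrow> real" where
    "removed_both j = (\<lambda>x. of_bool (\<not> perc_kept M n (fst x) j \<and> \<not> perc_kept M n (snd x) j))" for j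
  have "0 < M ^ n" using assms(1) by simp
  then have removed: "measure_pmf.expectation (pair_pmf P P) (removed_both 0) = (1 - p ^ n)\<^sup>2"
    "measure_pmf.expectation (pair_pmf P P) (removed_both (M ^ n - 1)) = (1 - p ^ n)\<^sup>2"
    using expectation_perc_removed_both[OF assms(2,3)]
    by (simp_all add: P_def removed_both_def case_prod_beta')
  have "measure_pmf.expectation (pair_pmf P P) (\<lambda>(\<omega>1, \<omega>2). V0 (perc_D M n \<omega>1 \<inter> perc_D M n \<omega>2))
      = measure_pmf.expectation (pair_pmf P P) (\<lambda>x. V0 (perc_K M n (fst x)) + V0 (perc_K M n (snd x))
          - V0 (perc_K M n (fst x) \<inter> perc_K M n (snd x)) + Niso (perc_K M n (fst x) \<inter> perc_K M n (snd x))
          + removed_both 0 x + removed_both (M ^ n - 1) x - 1)"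
    using assms(1) by (intro Bochner_Integration.integral_cong)
      (auto simp: perc_D_eq_grid_union perc_K_eq_grid_union V0_grid_union_compl_Int removed_both_def)
  also have "\<dots> = 2 * measure_pmf.expectation P (\<lambda>\<omega>. V0 (perc_K M n \<omega>))
      - measure_pmf.expectation (pair_pmf P P) (\<lambda>(\<omega>1, \<omega>2). V0 (perc_K M n \<omega>1 \<inter> perc_K M n \<omega>2))
      + measure_pmf.expectation (pair_pmf P P) (\<lambda>(\<omega>1, \<omega>2). Niso (perc_K M n \<omega>1 \<inter> perc_K M n \<omega>2))
      + 2 * (1 - p ^ n)\<^sup>2 - 1"
    using removed
    by (simp add: P_def integrable_pair_perc_pmf case_prod_beta'
        expectation_pair_pmf_fst[where f = "\<lambda>\<omega>. V0 (perc_K M n \<omega>)"]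
        expectation_pair_pmf_snd[where f = "\<lambda>\<omega>. V0 (perc_K M n \<omega>)"])
  moreover have "2 * (1 - p ^ n)\<^sup>2 - 1 = 1 - 4 * p ^ n + 2 * p ^ (2 * n)"
    unfolding power_even_eq by (simp add: power2_diff algebra_simps)
  ultimately show ?thesis by linarith
qed

lemma expectation_V1_perc_D:
  assumes "0 < M"
  shows "measure_pmf.expectation (perc_pmf M p n) (\<lambda>\<omega>. V1 (perc_D M n \<omega>))
    = 1 - measure_pmf.expectation (perc_pmf M p n) (\<lambda>\<omega>. V1 (perc_K M n \<omega>))"
  using assms
  by (simp add: perc_D_eq_grid_union perc_K_eq_grid_union V1_grid_union_compl integrable_perc_pmf)

lemma expectation_V0_perc_D:
  assumes "0 < M" "0 \<le> p" "p \<le> 1"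
  shows "measure_pmf.expectation (perc_pmf M p n) (\<lambda>\<omega>. V0 (perc_D M n \<omega>))
    = measure_pmf.expectation (perc_pmf M p n) (\<lambda>\<omega>. V0 (perc_K M n \<omega>)) + 1 - 2 * p ^ n"
proof -
  have "0 < M ^ n" using assms(1) by simp
  then show ?thesis
    using expectation_perc_removed[OF assms(2,3), of 0 M n]
      expectation_perc_removed[OF assms(2,3), of "M ^ n - 1" M n]
    by (simp add: perc_D_eq_grid_union[OF assms(1)] perc_K_eq_grid_union V0_grid_union_compl
        integrable_perc_pmf)
qed

theorem corollary5p6:
  fixes M :: nat and p :: real and n :: nat
  assumes "M \<ge> 2" and "0 < p" and "p \<le> 1"
  defines "P \<equiv> perc_pmf M p n"
  defines "P2 \<equiv> pair_pmf (perc_pmf M p n) (perc_pmf M p n)"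
  shows
    "(measure_pmf.expectation P2 (\<lambda>(\<omega>1, \<omega>2). V1 (perc_D M n \<omega>1 \<inter> perc_D M n \<omega>2))
       = 1 - 2 * measure_pmf.expectation P (\<lambda>\<omega>. V1 (perc_K M n \<omega>))
         + measure_pmf.expectation P2 (\<lambda>(\<omega>1, \<omega>2). V1 (perc_K M n \<omega>1 \<inter> perc_K M n \<omega>2)))
    \<and> (measure_pmf.expectation P2 (\<lambda>(\<omega>1, \<omega>2). V0 (perc_D M n \<omega>1 \<inter> perc_D M n \<omega>2))
       = 2 * measure_pmf.expectation P (\<lambda>\<omega>. V0 (perc_K M n \<omega>))
         - measure_pmf.expectation P2 (\<lambda>(\<omega>1, \<omega>2). V0 (perc_K M n \<omega>1 \<inter> perc_K M n \<omega>2))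
         + measure_pmf.expectation P2 (\<lambda>(\<omega>1, \<omega>2). Niso (perc_K M n \<omega>1 \<inter> perc_K M n \<omega>2))
         + 1 - 4 * p ^ n + 2 * p ^ (2 * n))
    \<and> (measure_pmf.expectation P (\<lambda>\<omega>. V1 (perc_D M n \<omega>))
       = 1 - measure_pmf.expectation P (\<lambda>\<omega>. V1 (perc_K M n \<omega>)))
    \<and> (measure_pmf.expectation P (\<lambda>\<omega>. V0 (perc_D M n \<omega>))
       = measure_pmf.expectation P (\<lambda>\<omega>. V0 (perc_K M n \<omega>)) + 1 - 2 * p ^ n)"
proof -
  have M: "0 < M" and p: "0 \<le> p" using assms(1,2) by simp_all
  show ?thesis
    unfolding P2_def P_def
    using expectation_V1_perc_D_Int[OF M] expectation_V0_perc_D_Int[OF M p assms(3)]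
      expectation_V1_perc_D[OF M] expectation_V0_perc_D[OF M p assms(3)]
    by blast
qed

end
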